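(* For integers $k \geq 0$ and $0 \leq n \leq k$, let $a_{k,n} = (-2)^k + 2^n$. Let $0 \leq n \leq k_1$ and $0 \leq m \leq k_2$ with $(k_1, n) \neq (k_2, m)$. Then $a_{k_1,n} = a_{k_2,m}$ if and only if $k_1$ and $k_2$ are both odd, $n = k_1$ and $m = k_2$. *)

theory Defs
  imports Main
begin

definition a_seq :: "nat \<Rightarrow> nat \<Rightarrow> int" where
  "a_seq k n = (-2) ^ k + 2 ^ n"

end

theory Submission
  imports Defs
begin

text \<open>For even \<open>k\<close> the value \<open>a_seq k n - 1\<close> lies in \<open>[2^k, 2^(k+1))\<close>; for odd \<open>k = k' + 1\<close> and
  \<open>n < k\<close> the value \<open>- a_seq k n\<close> lies in \<open>[2^k', 2^k)\<close>. So the sign of a nonzero value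
  determines the parity of \<open>k\<close>, its size then determines \<open>k\<close>, and \<open>2^n\<close> determines \<open>n\<close>.
  The only collisions are therefore among the zeros \<open>a_seq k k\<close> with \<open>k\<close> odd.\<close>

lemma power_band_unique:
  fixes c x :: "'a::linordered_semidom"
  assumes "1 < c"
    and "c ^ a \<le> x" "x < c ^ Suc a"
    and "c ^ b \<le> x" "x < c ^ Suc b"
  shows "a = b"
proof (rule ccontr)
  have mono: "c ^ Suc i \<le> c ^ j" if "i < j" for i j
    using that \<open>1 < c\<close> by (intro power_increasing) auto
  assume "a \<noteq> b"
  then consider "a < b" | "b < a" by linarith
  then show False
    by cases (use mono[of a b] mono[of b a] assms in auto)
qed

lemma a_seq_even_band:
  assumes "even k" "n \<le> k"
  shows "2 ^ k \<le> a_seq k n - 1" "a_seq k n - 1 < 2 ^ Suc k"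
proof -
  have "(2::int) ^ n \<le> 2 ^ k"
    using assms(2) by (intro power_increasing) auto
  moreover have "(1::int) \<le> 2 ^ n" by simp
  moreover have "a_seq k n = 2 ^ k + 2 ^ n"
    using assms(1) by (simp add: a_seq_def)
  moreover have "(2::int) ^ Suc k = 2 ^ k + 2 ^ k" by simp
  ultimately show "2 ^ k \<le> a_seq k n - 1" "a_seq k n - 1 < 2 ^ Suc k"
    by linarith+
qed

lemma a_seq_odd_band:
  assumes "even k" "n \<le> k"
  shows "2 ^ k \<le> - a_seq (Suc k) n" "- a_seq (Suc k) n < 2 ^ Suc k"
proof -
  have "(2::int) ^ n \<le> 2 ^ k"
    using assms(2) by (intro power_increasing) auto
  moreover have "(0::int) < 2 ^ n" by simp
  moreover have "- a_seq (Suc k) n = 2 ^ Suc k - 2 ^ n"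
    using assms(1) by (simp add: a_seq_def)
  moreover have "(2::int) ^ Suc k = 2 ^ k + 2 ^ k" by simp
  ultimately show "2 ^ k \<le> - a_seq (Suc k) n" "- a_seq (Suc k) n < 2 ^ Suc k"
    by linarith+
qed

lemma a_seq_eq_0_iff:
  assumes "n \<le> k"
  shows "a_seq k n = 0 \<longleftrightarrow> odd k \<and> n = k"
proof (cases "even k")
  case True
  then show ?thesis
    using a_seq_even_band(1)[OF True assms] by (smt (verit) zero_less_power)
next
  case False
  then have "a_seq k n = 2 ^ n - 2 ^ k" by (simp add: a_seq_def)
  then show ?thesis
    using False by auto
qed

lemma a_seq_pos_iff:
  assumes "n \<le> k"
  shows "0 < a_seq k n \<longleftrightarrow> even k"
proof (cases "even k")
  case True
  then show ?thesis
    using a_seq_even_band(1)[OF True assms] by (smt (verit) zero_less_power)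
next
  case False
  have "(2::int) ^ n \<le> 2 ^ k"
    using assms by (intro power_increasing) auto
  then show ?thesis
    using False by (simp add: a_seq_def)
qed

lemma a_seq_same_k_eq_iff: "a_seq k n = a_seq k m \<longleftrightarrow> n = m"
  by (simp add: a_seq_def)

lemma a_seq_eq_nonzero_imp_same_k:
  assumes "n \<le> k1" "m \<le> k2"
    and eq: "a_seq k1 n = a_seq k2 m" and nonzero: "a_seq k1 n \<noteq> 0"
  shows "k1 = k2"
proof -
  have parity: "even k1 \<longleftrightarrow> even k2"
    using a_seq_pos_iff[OF assms(1)] a_seq_pos_iff[OF assms(2)] eq by simp
  show ?thesis
  proof (cases "even k1")
    case True
    then show ?thesis
      using a_seq_even_band[OF True assms(1)] a_seq_even_band[of k2 m] parity assms(2) eq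
      by (intro power_band_unique[of 2 k1 "a_seq k1 n - 1"]) simp_all
  next
    case False
    then obtain j1 j2 where k: "k1 = Suc j1" "k2 = Suc j2" and "even j1" "even j2"
      using parity by (auto elim!: oddE)
    have "n \<noteq> k1" "m \<noteq> k2"
      using nonzero eq False parity a_seq_eq_0_iff[OF assms(1)] a_seq_eq_0_iff[OF assms(2)] by auto
    then have "n \<le> j1" "m \<le> j2"
      using assms(1,2) k by auto
    then have "j1 = j2"
      using a_seq_odd_band[OF \<open>even j1\<close> \<open>n \<le> j1\<close>]
        a_seq_odd_band[OF \<open>even j2\<close> \<open>m \<le> j2\<close>] eq k
      by (intro power_band_unique[of 2 j1 "- a_seq k1 n"]) simp_all
    then show ?thesis using k by simp
  qed
qed

theorem lemma3:
  fixes k1 k2 n m :: nat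
  assumes "n \<le> k1" and "m \<le> k2" and "(k1, n) \<noteq> (k2, m)"
  shows "a_seq k1 n = a_seq k2 m \<longleftrightarrow> odd k1 \<and> odd k2 \<and> n = k1 \<and> m = k2"
proof
  assume eq: "a_seq k1 n = a_seq k2 m"
  have "a_seq k1 n = 0"
  proof (rule ccontr)
    assume "a_seq k1 n \<noteq> 0"
    then have "k1 = k2"
      using a_seq_eq_nonzero_imp_same_k[OF assms(1,2) eq] by blast
    with eq have "n = m"
      by (simp add: a_seq_same_k_eq_iff)
    with \<open>k1 = k2\<close> show False
      using assms(3) by simp
  qed
  then show "odd k1 \<and> odd k2 \<and> n = k1 \<and> m = k2"
    using eq a_seq_eq_0_iff[OF assms(1)] a_seq_eq_0_iff[OF assms(2)] by simp
next
  assume "odd k1 \<and> odd k2 \<and> n = k1 \<and> m = k2"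
  then show "a_seq k1 n = a_seq k2 m"
    using a_seq_eq_0_iff[OF assms(1)] a_seq_eq_0_iff[OF assms(2)] by simp
qed

end
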